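(* Let $S$ be an inverse semigroup that is a mirror semigroup, with semilattice of idempotents $\Sigma=\Sigma(S)$. Then $(S,\leqslant)$ is conditionally directed-complete if and only if $(\Sigma,\leqslant)$ is conditionally directed-complete.
   Context: An inverse semigroup is a semigroup $S$ in which every $s$ has a unique $s^*$ with $ss^*s=s$ and $s^*ss^*=s^*$. $\Sigma(S)$ is the set of idempotents of $S$. The intrinsic order is $s\leqslant t$ iff $s=t\epsilon$ for some idempotent $\epsilon$. A subset of a poset is directed if it is nonempty and any two elements have an upper bound in it. A poset is conditionally directed-complete if every directed subset that is bounded above has a supremum. $S$ is a mirror semigroup if every directed subset of $\Sigma$ having a supremum in $(\Sigma,\leqslant)$ also has a supremum in $(S,\leqslant)$. *)

theory Defs
  imports Main
begin

definition inverse_semigroup :: "('a::semigroup_mult) itself \<Rightarrow> bool" where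
  "inverse_semigroup _ \<longleftrightarrow> (\<forall>s::'a. \<exists>!t. s * t * s = s \<and> t * s * t = t)"

definition idempotents :: "('a::semigroup_mult) set" where
  "idempotents = {e. e * e = e}"

definition intr_le :: "'a::semigroup_mult \<Rightarrow> 'a \<Rightarrow> bool" where
  "intr_le s t \<longleftrightarrow> (\<exists>e\<in>idempotents. s = t * e)"

definition directed :: "('a::semigroup_mult) set \<Rightarrow> bool" where
  "directed D \<longleftrightarrow> D \<noteq> {} \<and> (\<forall>a\<in>D. \<forall>b\<in>D. \<exists>c\<in>D. intr_le a c \<and> intr_le b c)"

definition is_sup_in :: "('a::semigroup_mult) set \<Rightarrow> 'a set \<Rightarrow> 'a \<Rightarrow> bool" where
  "is_sup_in P D x \<longleftrightarrow> x \<in> P \<and> (\<forall>d\<in>D. intr_le d x)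
      \<and> (\<forall>y\<in>P. (\<forall>d\<in>D. intr_le d y) \<longrightarrow> intr_le x y)"

definition bounded_above_in :: "('a::semigroup_mult) set \<Rightarrow> 'a set \<Rightarrow> bool" where
  "bounded_above_in P D \<longleftrightarrow> (\<exists>u\<in>P. \<forall>d\<in>D. intr_le d u)"

definition cond_directed_complete :: "('a::semigroup_mult) set \<Rightarrow> bool" where
  "cond_directed_complete P \<longleftrightarrow>
     (\<forall>D. D \<subseteq> P \<and> directed D \<and> bounded_above_in P D \<longrightarrow> (\<exists>x. is_sup_in P D x))"

definition mirror_semigroup :: "('a::semigroup_mult) itself \<Rightarrow> bool" where
  "mirror_semigroup _ \<longleftrightarrow>
     (\<forall>D::'a set. D \<subseteq> idempotents \<and> directed D \<and> (\<exists>x. is_sup_in idempotents D x)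
        \<longrightarrow> (\<exists>x. is_sup_in UNIV D x))"

end

theory Submission
  imports Defs
begin

text \<open>Taking domains \<open>s \<mapsto> s\<^sup>* s\<close> turns a directed family \<open>D\<close> bounded above by \<open>u\<close>
into a directed family of idempotents bounded above by \<open>u\<^sup>* u\<close>. Completeness of the
idempotents together with the mirror property yields a supremum \<open>x\<close> of these domains in \<open>S\<close>,
and \<open>u x\<close> is then the supremum of \<open>D\<close>: every \<open>d \<in> D\<close> is the restriction \<open>u (d\<^sup>* d)\<close> of \<open>u\<close>.
Conversely, anything below an idempotent is idempotent, so suprema in \<open>S\<close> of bounded sets
of idempotents are suprema in the semilattice of idempotents.\<close>

definition star :: "'a::semigroup_mult \<Rightarrow> 'a" where
  "star s = (THE t. s * t * s = s \<and> t * s * t = t)"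

lemma idempotent_absorb_left: "(e::'a::semigroup_mult) * e = e \<Longrightarrow> e * (e * z) = e * z"
  by (metis mult.assoc)

lemma is_sup_in_restrict: "is_sup_in UNIV D x \<Longrightarrow> x \<in> P \<Longrightarrow> is_sup_in P D x"
  unfolding is_sup_in_def by blast

lemma directed_image_mono:
  assumes "directed D" and "\<And>a b. intr_le a b \<Longrightarrow> intr_le (f a) (f b)"
  shows "directed (f ` D)"
  using assms unfolding directed_def by blast

context
  assumes inverse: "inverse_semigroup TYPE('a::semigroup_mult)"
begin

lemma star_ex1: "\<exists>!t. (s::'a) * t * s = s \<and> t * s * t = t"
  using inverse unfolding inverse_semigroup_def by blast

lemma mult_star_mult: "(s::'a) * star s * s = s"
  and star_mult_star: "star s * s * star s = star s"
  using theI'[OF star_ex1[of s]] unfolding star_def by auto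

lemma star_unique: "(s::'a) * t * s = s \<Longrightarrow> t * s * t = t \<Longrightarrow> star s = t"
  unfolding star_def by (rule the1_equality[OF star_ex1]) auto

lemma idempotent_mult:
  assumes e: "(e::'a) * e = e" and f: "f * f = f"
  shows "(e * f) * (e * f) = e * f"
proof -
  define x where "x = star (e * f)"
  have efx: "e * (f * (x * (e * f))) = e * f"
    using mult_star_mult[of "e * f"] by (simp add: x_def mult.assoc)
  have xef: "x * (e * (f * x)) = x"
    using star_mult_star[of "e * f"] by (simp add: x_def mult.assoc)
  \<comment> \<open>\<open>f x e\<close> is a second inverse of \<open>e f\<close>, so it equals \<open>x\<close>; this forces \<open>x\<close> to be idempotent.\<close>
  have "star (e * f) = f * x * e"
  proof (rule star_unique)
    show "e * f * (f * x * e) * (e * f) = e * f"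
      using efx e f by (simp add: mult.assoc idempotent_absorb_left)
    have "f * (x * (e * (f * x))) * e = f * x * e"
      using xef by (simp add: mult.assoc)
    then show "f * x * e * (e * f) * (f * x * e) = f * x * e"
      using e f by (simp add: mult.assoc idempotent_absorb_left)
  qed
  then have fxe: "f * (x * e) = x"
    by (simp add: x_def mult.assoc)
  have x_idem: "x * x = x"
  proof -
    have "x * x = f * (x * (e * (f * x))) * e"
      using fxe by (metis mult.assoc)
    also have "\<dots> = x"
      using xef fxe by (simp add: mult.assoc)
    finally show ?thesis .
  qed
  have "star x = e * f"
    by (rule star_unique) (use efx xef in \<open>simp_all add: mult.assoc\<close>)
  moreover have "star x = x"
    by (rule star_unique) (simp_all add: x_idem)
  ultimately show ?thesis
    using x_idem by simp
qed

lemma idempotents_commute: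
  assumes e: "(e::'a) * e = e" and f: "f * f = f"
  shows "e * f = f * e"
proof -
  have ef: "(e * f) * (e * f) = e * f" and fe: "(f * e) * (f * e) = f * e"
    using idempotent_mult e f by auto
  have "star (e * f) = f * e"
    by (rule star_unique)
       (use ef fe e f in \<open>simp_all add: mult.assoc idempotent_absorb_left\<close>)
  moreover have "star (e * f) = e * f"
    by (rule star_unique) (simp_all add: ef)
  ultimately show ?thesis
    by simp
qed

lemma star_idempotent: "(e::'a) * e = e \<Longrightarrow> star e = e"
  by (rule star_unique) simp_all

lemma star_star: "star (star (s::'a)) = s"
  by (rule star_unique) (simp_all add: mult_star_mult star_mult_star)

lemma mult_star_idempotent: "((s::'a) * star s) * (s * star s) = s * star s"
  using mult_star_mult by (metis mult.assoc)

lemma star_mult_idempotent: "(star (s::'a) * s) * (star s * s) = star s * s"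
  using star_mult_star by (metis mult.assoc)

lemma star_mult: "star ((s::'a) * t) = star t * star s"
proof (rule star_unique)
  have c: "(t * star t) * (star s * s) = (star s * s) * (t * star t)"
    using idempotents_commute mult_star_idempotent star_mult_idempotent by blast
  have "s * t * (star t * star s) * (s * t) = s * ((t * star t) * (star s * s)) * t"
    by (simp add: mult.assoc)
  also have "\<dots> = s * t"
    unfolding c by (metis mult_star_mult mult.assoc)
  finally show "s * t * (star t * star s) * (s * t) = s * t" .
  have "star t * star s * (s * t) * (star t * star s)
      = star t * ((star s * s) * (t * star t)) * star s"
    by (simp add: mult.assoc)
  also have "\<dots> = star t * star s"
    unfolding c[symmetric] by (metis star_mult_star mult.assoc)
  finally show "star t * star s * (s * t) * (star t * star s) = star t * star s" .
qed

lemma conj_idempotent: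
  assumes e: "(e::'a) * e = e"
  shows "(t * e * star t) * (t * e * star t) = t * e * star t"
proof -
  have c: "e * (star t * t) = (star t * t) * e"
    using idempotents_commute[OF e star_mult_idempotent] .
  have "(t * e * star t) * (t * e * star t) = t * (e * (star t * t) * e) * star t"
    by (simp add: mult.assoc)
  also have "\<dots> = t * e * star t"
    unfolding c using e by (metis mult_star_mult mult.assoc)
  finally show ?thesis .
qed

lemma star_mult_restrict:
  assumes e: "(e::'a) * e = e"
  shows "star (t * e) * (t * e) = (star t * t) * e"
  unfolding star_mult star_idempotent[OF e]
  using idempotents_commute[OF e star_mult_idempotent[of t]] e by (metis mult.assoc)

lemma intr_le_iff_right: "intr_le (s::'a) t \<longleftrightarrow> s = t * (star s * s)"
proof
  assume "intr_le s t"
  then obtain e where e: "e * e = e" and s: "s = t * e"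
    unfolding intr_le_def idempotents_def by auto
  show "s = t * (star s * s)"
    unfolding s star_mult_restrict[OF e] by (metis mult_star_mult mult.assoc)
next
  assume "s = t * (star s * s)"
  then show "intr_le s t"
    unfolding intr_le_def idempotents_def using star_mult_idempotent by blast
qed

lemma intr_le_iff_left: "intr_le (s::'a) t \<longleftrightarrow> (\<exists>f. f * f = f \<and> s = f * t)"
proof
  assume "intr_le s t"
  then obtain e where e: "e * e = e" and s: "s = t * e"
    unfolding intr_le_def idempotents_def by auto
  have c: "e * (star t * t) = star t * t * e"
    using idempotents_commute[OF e star_mult_idempotent] .
  have "(t * e * star t) * t = t * (e * (star t * t))"
    by (simp add: mult.assoc)
  also have "\<dots> = t * star t * t * e"
    unfolding c by (simp add: mult.assoc)
  finally have "s = (t * e * star t) * t"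
    unfolding s mult_star_mult by simp
  then show "\<exists>f. f * f = f \<and> s = f * t"
    using conj_idempotent[OF e] by blast
next
  assume "\<exists>f. f * f = f \<and> s = f * t"
  then obtain f where f: "f * f = f" and s: "s = f * t"
    by blast
  have c: "f * (t * star t) = t * star t * f"
    using idempotents_commute[OF f mult_star_idempotent] .
  have "t * (star t * f * t) = t * star t * f * t"
    by (simp add: mult.assoc)
  also have "\<dots> = f * (t * star t * t)"
    unfolding c[symmetric] by (simp add: mult.assoc)
  finally have "s = t * (star t * f * t)"
    unfolding s mult_star_mult by simp
  then show "intr_le s t"
    unfolding intr_le_def idempotents_def
    using conj_idempotent[OF f, of "star t", unfolded star_star] by blast
qed

lemma intr_le_star_mult_mono: "intr_le (s::'a) t \<Longrightarrow> intr_le (star s * s) (star t * t)"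
  unfolding intr_le_def idempotents_def using star_mult_restrict by auto

lemma intr_le_eq_left: "intr_le (s::'a) t \<Longrightarrow> s = s * star s * t"
proof -
  assume "intr_le s t"
  then obtain f where f: "f * f = f" and s: "s = f * t"
    using intr_le_iff_left by blast
  have "s * star s * t = f * f * (t * star t) * t"
    unfolding s star_mult star_idempotent[OF f]
    using idempotents_commute[OF f mult_star_idempotent[of t]] by (simp add: mult.assoc)
  then show ?thesis
    unfolding s using f by (metis mult_star_mult mult.assoc)
qed

lemma intr_le_idempotent:
  assumes "intr_le (s::'a) e" and e: "e * e = e"
  shows "e * s = s" and "s * s = s"
proof -
  obtain f where f: "f * f = f" and s: "s = e * f"
    using assms(1) unfolding intr_le_def idempotents_def by auto
  show "e * s = s"
    unfolding s using e by (metis mult.assoc)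
  show "s * s = s"
    unfolding s using idempotent_mult[OF e f] .
qed

lemma sup_below_idempotent:
  assumes "is_sup_in UNIV D (x::'a)" and "u * u = u" and "\<forall>d\<in>D. intr_le d u"
  shows "x * x = x"
  using assms intr_le_idempotent(2) unfolding is_sup_in_def by blast

lemma sup_of_domains:
  assumes bound: "\<forall>d\<in>D. intr_le d (u::'a)"
    and sup: "is_sup_in UNIV ((\<lambda>d. star d * d) ` D) x"
  shows "is_sup_in UNIV D (u * x)"
proof -
  let ?E = "(\<lambda>d. star d * d) ` D"
  have below_uu: "\<forall>g\<in>?E. intr_le g (star u * u)"
    using bound intr_le_star_mult_mono by auto
  have x_idem: "x * x = x"
    using sup_below_idempotent[OF sup star_mult_idempotent below_uu] .
  have x_absorb: "x * (star d * d) = star d * d" if "d \<in> D" for d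
    using sup that x_idem intr_le_idempotent(1) unfolding is_sup_in_def by blast
  have uu_absorb: "star u * u * (star d * d) = star d * d" if "d \<in> D" for d
    using below_uu that star_mult_idempotent intr_le_idempotent(1) by blast
  have u_restrict: "u * (star d * d) = d" if "d \<in> D" for d
    using bound that intr_le_iff_right by (metis (no_types))
  have upper: "intr_le d (u * x)" if d: "d \<in> D" for d
  proof -
    have "d = u * x * (star d * d)"
      using u_restrict[OF d] x_absorb[OF d] by (simp add: mult.assoc)
    then show ?thesis
      unfolding intr_le_def idempotents_def using star_mult_idempotent by blast
  qed
  have least: "intr_le (u * x) y" if y: "\<forall>d\<in>D. intr_le d y" for y
  proof -
    have "intr_le (star d * d) (x * star u * y)" if d: "d \<in> D" for d
    proof -
      have "y * (star d * d) = d"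
        using y d intr_le_iff_right by (metis (no_types))
      then have "x * star u * y * (star d * d) = x * star u * d"
        by (simp add: mult.assoc)
      also have "\<dots> = x * (star u * u * (star d * d))"
        using u_restrict[OF d] by (simp add: mult.assoc)
      also have "\<dots> = star d * d"
        using uu_absorb[OF d] x_absorb[OF d] by simp
      finally have "star d * d = x * star u * y * (star d * d)"
        by (rule sym)
      then show ?thesis
        unfolding intr_le_def idempotents_def using star_mult_idempotent[of d] by blast
    qed
    then have "intr_le x (x * star u * y)"
      using sup unfolding is_sup_in_def by blast
    then have "x = x * star x * (x * star u * y)"
      by (rule intr_le_eq_left)
    then have "x = x * star u * y"
      by (simp add: star_idempotent[OF x_idem] mult.assoc idempotent_absorb_left[OF x_idem])
    then have "u * x = (u * x * star u) * y"
      by (simp add: mult.assoc)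
    then show ?thesis
      using intr_le_iff_left conj_idempotent[OF x_idem] by blast
  qed
  show ?thesis
    unfolding is_sup_in_def using upper least by blast
qed

lemma cond_directed_complete_idempotents:
  assumes complete: "cond_directed_complete (UNIV::'a set)"
  shows "cond_directed_complete (idempotents::'a set)"
  unfolding cond_directed_complete_def
proof (intro allI impI)
  fix D :: "'a set"
  assume D: "D \<subseteq> idempotents \<and> directed D \<and> bounded_above_in idempotents D"
  then obtain u where u: "u * u = u" "\<forall>d\<in>D. intr_le d u"
    unfolding bounded_above_in_def idempotents_def by auto
  then have "bounded_above_in UNIV D"
    unfolding bounded_above_in_def by blast
  then obtain x where x: "is_sup_in UNIV D x"
    using complete D unfolding cond_directed_complete_def by blast
  then have "x \<in> idempotents"
    using sup_below_idempotent u unfolding idempotents_def by blast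
  then show "\<exists>x. is_sup_in idempotents D x"
    using x is_sup_in_restrict by blast
qed

lemma cond_directed_complete_UNIV:
  assumes mirror: "mirror_semigroup TYPE('a)"
    and complete: "cond_directed_complete (idempotents::'a set)"
  shows "cond_directed_complete (UNIV::'a set)"
  unfolding cond_directed_complete_def
proof (intro allI impI)
  fix D :: "'a set"
  assume D: "D \<subseteq> UNIV \<and> directed D \<and> bounded_above_in UNIV D"
  then obtain u where u: "\<forall>d\<in>D. intr_le d u"
    unfolding bounded_above_in_def by auto
  let ?E = "(\<lambda>d. star d * d) ` D"
  have E_idem: "?E \<subseteq> idempotents"
    unfolding idempotents_def using star_mult_idempotent by auto
  have E_directed: "directed ?E"
    by (rule directed_image_mono) (use D intr_le_star_mult_mono in auto)
  have "\<forall>g\<in>?E. intr_le g (star u * u)"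
    using u intr_le_star_mult_mono by blast
  then have "bounded_above_in idempotents ?E"
    unfolding bounded_above_in_def idempotents_def using star_mult_idempotent[of u] by blast
  then obtain e where "is_sup_in idempotents ?E e"
    using complete E_idem E_directed unfolding cond_directed_complete_def by blast
  then obtain x where "is_sup_in UNIV ?E x"
    using mirror E_idem E_directed unfolding mirror_semigroup_def by blast
  then show "\<exists>x. is_sup_in UNIV D x"
    using sup_of_domains u by blast
qed

end

theorem proposition3p7:
  assumes "inverse_semigroup TYPE('a::semigroup_mult)"
      and "mirror_semigroup TYPE('a)"
  shows "cond_directed_complete (UNIV :: 'a set) \<longleftrightarrow> cond_directed_complete (idempotents :: 'a set)"
  using cond_directed_complete_idempotents[OF assms(1)]
    cond_directed_complete_UNIV[OF assms(1,2)] by blast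

end
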